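(* Let $(M,\rho)$ be a metric space and $f:[a,b]\to M$. If $md(f,x)$ exists for every $x\in[a,b]$ and $x\mapsto md(f,x)$ is Lebesgue integrable on $[a,b]$, then $f$ is absolutely continuous on $[a,b]$.
   Context: $md(f,x)=\lim_{t\to0,\ x+t\in[a,b]}\rho(f(x+t),f(x))/|t|$ when it exists (finite). Absolute continuity of $f$: for every $\varepsilon>0$ there is $\delta>0$ such that for non-overlapping intervals $[a_i,b_i]\subset[a,b]$ with $\sum_i(b_i-a_i)<\delta$ one has $\sum_i\rho(f(b_i),f(a_i))<\varepsilon$. *)

theory Defs
  imports "HOL-Analysis.Analysis"
begin

definition md_quot :: "(real \<Rightarrow> 'm::metric_space) \<Rightarrow> real \<Rightarrow> real \<Rightarrow> real" where
  "md_quot f x t = dist (f (x + t)) (f x) / \<bar>t\<bar>"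

definition md_exists :: "(real \<Rightarrow> 'm::metric_space) \<Rightarrow> real \<Rightarrow> real \<Rightarrow> real \<Rightarrow> bool" where
  "md_exists f a b x \<longleftrightarrow>
     (\<exists>L. (md_quot f x \<longlongrightarrow> L) (at 0 within {t. x + t \<in> {a..b}}))"

text \<open>The value md(f,x) (meaningful when it exists).\<close>
definition md :: "(real \<Rightarrow> 'm::metric_space) \<Rightarrow> real \<Rightarrow> real \<Rightarrow> real \<Rightarrow> real" where
  "md f a b x = Lim (at 0 within {t. x + t \<in> {a..b}}) (md_quot f x)"

definition abs_cont_metric :: "(real \<Rightarrow> 'm::metric_space) \<Rightarrow> real \<Rightarrow> real \<Rightarrow> bool" where
  "abs_cont_metric f a b \<longleftrightarrow>
     (\<forall>\<epsilon>>0. \<exists>\<delta>>0. \<forall>(n::nat) (aa::nat \<Rightarrow> real) bb.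
        (\<forall>i<n. a \<le> aa i \<and> aa i \<le> bb i \<and> bb i \<le> b) \<and>
        (\<forall>i<n. \<forall>j<n. i \<noteq> j \<longrightarrow> bb i \<le> aa j \<or> bb j \<le> aa i) \<and>
        (\<Sum>i<n. bb i - aa i) < \<delta>
        \<longrightarrow> (\<Sum>i<n. dist (f (bb i)) (f (aa i))) < \<epsilon>)"

end

theory Submission
  imports Defs
begin

text \<open>Near each point x the metric derivative gives the local bound
  \<open>\<rho>(f y, f x) \<le> (md(f,x) + \<epsilon>) |y - x|\<close>. Applied to the real function \<open>y \<mapsto> \<rho>(f y, f c)\<close>,
  a Henstock--Kurzweil (gauge) Riemann sum turns these local bounds into
  \<open>\<rho>(f d, f c) \<le> \<integral>\<^sub>c\<^sup>d md(f,\<cdot>)\<close>. Absolute continuity of f is thereby reduced to the absolute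
  continuity of the indefinite integral of \<open>|md(f,\<cdot>)|\<close>, which follows by truncating this
  function at a large height N.\<close>

definition nonoverlapping_subintervals ::
    "real \<Rightarrow> real \<Rightarrow> nat \<Rightarrow> (nat \<Rightarrow> real) \<Rightarrow> (nat \<Rightarrow> real) \<Rightarrow> bool" where
  "nonoverlapping_subintervals a b n aa bb \<longleftrightarrow>
     (\<forall>i<n. a \<le> aa i \<and> aa i \<le> bb i \<and> bb i \<le> b) \<and>
     (\<forall>i<n. \<forall>j<n. i \<noteq> j \<longrightarrow> bb i \<le> aa j \<or> bb j \<le> aa i)"

lemma abs_cont_metric_iff:
  "abs_cont_metric f a b \<longleftrightarrow> (\<forall>\<epsilon>>0. \<exists>\<delta>>0. \<forall>n aa bb. nonoverlapping_subintervals a b n aa bb \<longrightarrow>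
     (\<Sum>i<n. bb i - aa i) < \<delta> \<longrightarrow> (\<Sum>i<n. dist (f (bb i)) (f (aa i))) < \<epsilon>)"
  unfolding abs_cont_metric_def nonoverlapping_subintervals_def by (simp add: imp_conjL)

lemma nonoverlapping_subintervalsD:
  assumes "nonoverlapping_subintervals a b n aa bb" "i < n"
  shows "a \<le> aa i" "aa i \<le> bb i" "bb i \<le> b"
    and "j < n \<Longrightarrow> i \<noteq> j \<Longrightarrow> bb i \<le> aa j \<or> bb j \<le> aa i"
  using assms unfolding nonoverlapping_subintervals_def by simp_all

lemma sum_integral_nonoverlapping_le:
  fixes h :: "real \<Rightarrow> real"
  assumes h: "h integrable_on {a..b}" "\<And>x. x \<in> {a..b} \<Longrightarrow> 0 \<le> h x"
    and I: "nonoverlapping_subintervals a b n aa bb"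
  shows "(\<Sum>i<n. integral {aa i..bb i} h) \<le> integral {a..b} h"
proof -
  have sub: "{aa i..bb i} \<subseteq> {a..b}" if "i < n" for i
    using nonoverlapping_subintervalsD[OF I that] by auto
  have "negligible ({aa i..bb i} \<inter> {aa j..bb j})" if "i < n" "j < n" "i \<noteq> j" for i j
  proof -
    have "bb i \<le> aa j \<or> bb j \<le> aa i"
      using nonoverlapping_subintervalsD(4)[OF I that] .
    then have "{aa i..bb i} \<inter> {aa j..bb j} \<subseteq> {bb i, bb j}" by auto
    moreover have "negligible {bb i, bb j}" by (simp add: negligible_finite)
    ultimately show ?thesis by (rule negligible_subset[rotated])
  qed
  then have U: "(h has_integral (\<Sum>i<n. integral {aa i..bb i} h)) (\<Union>i<n. {aa i..bb i})"
    using integrable_on_subinterval[OF h(1) sub]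
    by (intro has_integral_UN[OF finite_lessThan]) (auto simp: pairwise_def)
  have "(\<Union>i<n. {aa i..bb i}) \<subseteq> {a..b}" using sub by blast
  then have "integral (\<Union>i<n. {aa i..bb i}) h \<le> integral {a..b} h"
    using has_integral_integrable[OF U] h by (intro integral_subset_le) auto
  with U show ?thesis by (simp add: integral_unique)
qed

lemma integrable_on_min_const:
  fixes h :: "real \<Rightarrow> real"
  assumes "h absolutely_integrable_on {a..b}"
  shows "(\<lambda>x. min (h x) c) integrable_on {a..b}"
proof -
  have "(\<lambda>x. c) absolutely_integrable_on {a..b}" by simp
  then have "(\<lambda>x. min (h x) c) absolutely_integrable_on {a..b}"
    by (rule absolutely_integrable_min_1[OF assms])
  then show ?thesis by (rule set_lebesgue_integral_eq_integral(1))
qed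

lemma integral_min_const_tendsto:
  fixes h :: "real \<Rightarrow> real"
  assumes h: "h integrable_on {a..b}" "\<And>x. x \<in> {a..b} \<Longrightarrow> 0 \<le> h x"
  shows "(\<lambda>k. integral {a..b} (\<lambda>x. min (h x) (real k))) \<longlonglongrightarrow> integral {a..b} h"
proof (rule dominated_convergence(2)[OF _ h(1)])
  show "(\<lambda>x. min (h x) (real k)) integrable_on {a..b}" for k
    by (rule integrable_on_min_const[OF nonnegative_absolutely_integrable_1[OF h]])
  show "norm (min (h x) (real k)) \<le> h x" if "x \<in> {a..b}" for k x
    using h(2)[OF that] by auto
  show "(\<lambda>k. min (h x) (real k)) \<longlonglongrightarrow> h x" for x
  proof (rule tendsto_eventually)
    obtain K where "h x \<le> real K" using real_arch_simple by blast
    then show "\<forall>\<^sub>F k in sequentially. min (h x) (real k) = h x"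
      by (intro eventually_sequentiallyI[of K] min_absorb1) (meson of_nat_le_iff order_trans)
  qed
qed

lemma integral_nonoverlapping_small:
  fixes h :: "real \<Rightarrow> real"
  assumes h: "h integrable_on {a..b}" "\<And>x. x \<in> {a..b} \<Longrightarrow> 0 \<le> h x" and "\<epsilon> > 0"
  obtains \<delta> where "\<delta> > 0"
    "\<And>n aa bb. nonoverlapping_subintervals a b n aa bb \<Longrightarrow> (\<Sum>i<n. bb i - aa i) < \<delta> \<Longrightarrow>
       (\<Sum>i<n. integral {aa i..bb i} h) < \<epsilon>"
proof -
  define g where "g N x = min (h x) (real N)" for N x
  have g: "g N integrable_on {a..b}" for N
    unfolding g_def by (rule integrable_on_min_const[OF nonnegative_absolutely_integrable_1[OF h]])
  have "\<forall>\<^sub>F N in sequentially. integral {a..b} h - \<epsilon> / 2 < integral {a..b} (g N)"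
    using order_tendstoD(1)[OF integral_min_const_tendsto[OF h]] \<open>\<epsilon> > 0\<close> unfolding g_def by simp
  then obtain N where "integral {a..b} h - \<epsilon> / 2 < integral {a..b} (g N)"
    unfolding eventually_sequentially by (meson order_refl)
  then have N: "integral {a..b} h - integral {a..b} (g N) < \<epsilon> / 2" by linarith
  define \<delta> where "\<delta> = \<epsilon> / (2 * (real N + 1))"
  show thesis
  proof (rule that)
    show "\<delta> > 0" using \<open>\<epsilon> > 0\<close> by (simp add: \<delta>_def)
    fix n aa bb assume I: "nonoverlapping_subintervals a b n aa bb"
      and short: "(\<Sum>i<n. bb i - aa i) < \<delta>"
    define r where "r = (\<lambda>x. h x - g N x)"
    have r: "r integrable_on {a..b}" "\<And>x. x \<in> {a..b} \<Longrightarrow> 0 \<le> r x"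
      unfolding r_def by (rule integrable_diff[OF h(1) g]) (simp add: g_def)
    have piece: "integral {aa i..bb i} h \<le> real N * (bb i - aa i) + integral {aa i..bb i} r"
      if "i < n" for i
    proof -
      have sub: "{aa i..bb i} \<subseteq> {a..b}" and le: "aa i \<le> bb i"
        using nonoverlapping_subintervalsD[OF I that] by auto
      have gi: "g N integrable_on {aa i..bb i}" and ri: "r integrable_on {aa i..bb i}"
        using integrable_on_subinterval[OF g sub] integrable_on_subinterval[OF r(1) sub] by auto
      have "integral {aa i..bb i} (g N) \<le> integral {aa i..bb i} (\<lambda>x. real N)"
        by (rule integral_le[OF gi]) (auto simp: g_def)
      also have "\<dots> = real N * (bb i - aa i)" using le by simp
      finally show ?thesis
        using integral_add[OF gi ri] by (simp add: r_def)
    qed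
    have "(\<Sum>i<n. integral {aa i..bb i} h) \<le> real N * (\<Sum>i<n. bb i - aa i) + (\<Sum>i<n. integral {aa i..bb i} r)"
      using sum_mono[of "{..<n}", OF piece] by (simp add: sum.distrib sum_distrib_left)
    also have "(\<Sum>i<n. integral {aa i..bb i} r) \<le> integral {a..b} r"
      by (rule sum_integral_nonoverlapping_le[OF r I])
    also have "integral {a..b} r < \<epsilon> / 2"
      using N integral_diff[OF h(1) g] by (simp add: r_def)
    also have "real N * (\<Sum>i<n. bb i - aa i) \<le> real N * \<delta>"
      using short by (intro mult_left_mono) auto
    also have "real N * \<delta> < \<epsilon> / 2"
      using \<open>\<epsilon> > 0\<close> by (simp add: \<delta>_def field_simps)
    finally show "(\<Sum>i<n. integral {aa i..bb i} h) < \<epsilon>" by simp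
  qed
qed

lemma increment_le_Riemann_sum:
  fixes \<phi> g :: "real \<Rightarrow> real"
  assumes "c \<le> d" and D: "D tagged_division_of {c..d}" and fine: "(\<lambda>x. ball x (r x / 2)) fine D"
    and bound: "\<And>x u v. x \<in> {c..d} \<Longrightarrow> c \<le> u \<Longrightarrow> u \<le> x \<Longrightarrow> x \<le> v \<Longrightarrow> v \<le> d \<Longrightarrow> v - u < r x \<Longrightarrow>
                  \<phi> v - \<phi> u \<le> g x * (v - u)"
  shows "\<phi> d - \<phi> c \<le> (\<Sum>(x,K)\<in>D. Henstock_Kurzweil_Integration.content K *\<^sub>R g x)"
proof -
  have piece: "\<phi> (Sup K) - \<phi> (Inf K) \<le> Henstock_Kurzweil_Integration.content K *\<^sub>R g x"
    if xK: "(x, K) \<in> D" for x K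
  proof -
    obtain u v where K: "K = {u..v}"
      using tagged_division_ofD(4)[OF D xK] by auto
    have "x \<in> K" "K \<subseteq> {c..d}" "K \<subseteq> ball x (r x / 2)"
      using tagged_division_ofD(2,3)[OF D xK] fine xK by (auto simp: fine_def)
    then have "u \<le> x" "x \<le> v" "u \<in> K" "v \<in> K" "x \<in> {c..d}" unfolding K by auto
    then have "c \<le> u" "v \<le> d" "dist x u < r x / 2" "dist x v < r x / 2"
      using \<open>K \<subseteq> {c..d}\<close> \<open>K \<subseteq> ball x (r x / 2)\<close> by auto
    with \<open>u \<le> x\<close> \<open>x \<le> v\<close> \<open>x \<in> {c..d}\<close> have "\<phi> v - \<phi> u \<le> g x * (v - u)"
      by (intro bound) (auto simp: dist_real_def)
    then show ?thesis
      using \<open>u \<le> x\<close> \<open>x \<le> v\<close> unfolding K by (simp add: mult.commute)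
  qed
  have "(\<Sum>(x,K)\<in>D. \<phi> (Sup K) - \<phi> (Inf K)) \<le> (\<Sum>(x,K)\<in>D. Henstock_Kurzweil_Integration.content K *\<^sub>R g x)"
    using piece by (intro sum_mono) (simp add: case_prod_beta)
  then show ?thesis
    using additive_tagged_division_1[OF \<open>c \<le> d\<close> D, of \<phi>] by simp
qed

lemma increment_le_integral_of_local_bound:
  fixes \<phi> m :: "real \<Rightarrow> real"
  assumes "c \<le> d" and m: "m integrable_on {c..d}"
    and bound: "\<And>x e. x \<in> {c..d} \<Longrightarrow> e > 0 \<Longrightarrow> \<exists>r>0. \<forall>u v.
                  c \<le> u \<and> u \<le> x \<and> x \<le> v \<and> v \<le> d \<and> v - u < r \<longrightarrow> \<phi> v - \<phi> u \<le> (m x + e) * (v - u)"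
  shows "\<phi> d - \<phi> c \<le> integral {c..d} m"
proof -
  define I where "I = integral {c..d} m"
  have approx: "\<phi> d - \<phi> c \<le> I + e * (1 + (d - c))" if "e > 0" for e
  proof -
    have "(m has_integral I) {c..d}" using m unfolding I_def by (rule integrable_integral)
    then obtain \<gamma> where \<gamma>: "gauge \<gamma>" and Riemann: "\<And>D. D tagged_division_of {c..d} \<Longrightarrow> \<gamma> fine D \<Longrightarrow>
        norm ((\<Sum>(x,K)\<in>D. Henstock_Kurzweil_Integration.content K *\<^sub>R m x) - I) < e"
      using \<open>e > 0\<close> unfolding has_integral_real by meson
    have "\<forall>x. \<exists>r>0. x \<in> {c..d} \<longrightarrow> (\<forall>u v.
            c \<le> u \<and> u \<le> x \<and> x \<le> v \<and> v \<le> d \<and> v - u < r \<longrightarrow> \<phi> v - \<phi> u \<le> (m x + e) * (v - u))"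
      using bound[OF _ \<open>e > 0\<close>] zero_less_one by blast
    then obtain r where r: "\<forall>x. r x > 0 \<and> (x \<in> {c..d} \<longrightarrow> (\<forall>u v.
            c \<le> u \<and> u \<le> x \<and> x \<le> v \<and> v \<le> d \<and> v - u < r x \<longrightarrow> \<phi> v - \<phi> u \<le> (m x + e) * (v - u)))"
      by (rule choice[THEN exE])
    have "gauge (\<lambda>x. \<gamma> x \<inter> ball x (r x / 2))"
      using \<gamma> r by (intro gauge_Int) (auto simp: gauge_def)
    then obtain D where D: "D tagged_division_of {c..d}" and fine: "(\<lambda>x. \<gamma> x \<inter> ball x (r x / 2)) fine D"
      by (rule fine_division_exists_real)
    have "\<phi> d - \<phi> c \<le> (\<Sum>(x,K)\<in>D. Henstock_Kurzweil_Integration.content K *\<^sub>R (m x + e))"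
      using fine r by (intro increment_le_Riemann_sum[OF \<open>c \<le> d\<close> D]) (auto simp: fine_Int)
    also have "\<dots> = (\<Sum>(x,K)\<in>D. Henstock_Kurzweil_Integration.content K *\<^sub>R m x)
                   + e * (\<Sum>(x,K)\<in>D. Henstock_Kurzweil_Integration.content K)"
      by (simp add: algebra_simps sum.distrib sum_distrib_left case_prod_unfold)
    also have "(\<Sum>(x,K)\<in>D. Henstock_Kurzweil_Integration.content K) = d - c"
      using additive_content_tagged_division[of D c d] D \<open>c \<le> d\<close> by simp
    also have "(\<Sum>(x,K)\<in>D. Henstock_Kurzweil_Integration.content K *\<^sub>R m x) \<le> I + e"
      using Riemann[OF D] fine by (auto simp: fine_Int abs_diff_less_iff)
    finally show ?thesis by (simp add: algebra_simps)
  qed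
  show ?thesis
  proof (rule field_le_epsilon)
    fix e :: real assume "e > 0"
    then show "\<phi> d - \<phi> c \<le> integral {c..d} m + e"
      using approx[of "e / (1 + (d - c))"] \<open>c \<le> d\<close> by (simp add: I_def)
  qed
qed

lemma md_tendsto:
  fixes f :: "real \<Rightarrow> 'm::metric_space"
  assumes "a < b" "x \<in> {a..b}" "md_exists f a b x"
  shows "(md_quot f x \<longlongrightarrow> md f a b x) (at 0 within {t. x + t \<in> {a..b}})"
proof -
  have "{t. x + t \<in> {a..b}} = {a - x..b - x}" by auto
  then have "\<not> trivial_limit (at 0 within {t. x + t \<in> {a..b}})"
    using assms(1,2) by (simp add: trivial_limit_within)
  then show ?thesis
    using assms(3) tendsto_Lim unfolding md_exists_def md_def by blast
qed

lemma md_local_bound: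
  fixes f :: "real \<Rightarrow> 'm::metric_space"
  assumes "a < b" "x \<in> {a..b}" "md_exists f a b x" "e > 0"
  obtains r where "r > 0"
    "\<And>y. y \<in> {a..b} \<Longrightarrow> \<bar>y - x\<bar> < r \<Longrightarrow> dist (f y) (f x) \<le> (md f a b x + e) * \<bar>y - x\<bar>"
proof -
  have "\<forall>\<^sub>F t in at 0 within {t. x + t \<in> {a..b}}. md_quot f x t < md f a b x + e"
    using order_tendstoD(2)[OF md_tendsto[OF assms(1-3)]] \<open>e > 0\<close> by simp
  then obtain r where "r > 0" and r: "\<And>t. x + t \<in> {a..b} \<Longrightarrow> t \<noteq> 0 \<Longrightarrow> \<bar>t\<bar> < r \<Longrightarrow>
      dist (f (x + t)) (f x) / \<bar>t\<bar> < md f a b x + e"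
    unfolding eventually_at md_quot_def by (auto simp: dist_real_def)
  show thesis
  proof (rule that[OF \<open>r > 0\<close>])
    fix y assume "y \<in> {a..b}" "\<bar>y - x\<bar> < r"
    then show "dist (f y) (f x) \<le> (md f a b x + e) * \<bar>y - x\<bar>"
      using r[of "y - x"] by (cases "y = x") (auto simp: divide_less_eq mult.commute)
  qed
qed

lemma dist_le_integral_md:
  fixes f :: "real \<Rightarrow> 'm::metric_space"
  assumes md: "\<forall>x\<in>{a..b}. md_exists f a b x" and m: "md f a b integrable_on {c..d}"
    and "a \<le> c" "c \<le> d" "d \<le> b"
  shows "dist (f d) (f c) \<le> integral {c..d} (md f a b)"
proof (cases "c = d")
  case False
  then have "a < b" using assms by linarith
  have "dist (f d) (f c) - dist (f c) (f c) \<le> integral {c..d} (md f a b)"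
  proof (rule increment_le_integral_of_local_bound[OF \<open>c \<le> d\<close> m])
    fix x e :: real assume "x \<in> {c..d}" "e > 0"
    then obtain r where "r > 0" and r: "\<And>y. y \<in> {a..b} \<Longrightarrow> \<bar>y - x\<bar> < r \<Longrightarrow>
        dist (f y) (f x) \<le> (md f a b x + e) * \<bar>y - x\<bar>"
      using md_local_bound[OF \<open>a < b\<close> _ _ \<open>e > 0\<close>, of x f] md assms(3,5) by auto
    have "dist (f v) (f c) - dist (f u) (f c) \<le> (md f a b x + e) * (v - u)"
      if "c \<le> u" "u \<le> x" "x \<le> v" "v \<le> d" "v - u < r" for u v
    proof -
      have "dist (f v) (f c) - dist (f u) (f c) \<le> dist (f v) (f x) + dist (f u) (f x)"
        using dist_triangle[of "f v" "f c" "f u"] dist_triangle[of "f v" "f u" "f x"]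
        by (simp add: dist_commute)
      also have "\<dots> \<le> (md f a b x + e) * (v - x) + (md f a b x + e) * (x - u)"
        using r[of v] r[of u] that assms(3,5) by (intro add_mono) auto
      finally show ?thesis by (simp add: algebra_simps)
    qed
    with \<open>r > 0\<close> show "\<exists>r>0. \<forall>u v. c \<le> u \<and> u \<le> x \<and> x \<le> v \<and> v \<le> d \<and> v - u < r \<longrightarrow>
        dist (f v) (f c) - dist (f u) (f c) \<le> (md f a b x + e) * (v - u)"
      by blast
  qed
  then show ?thesis by simp
qed simp

lemma sum_dist_le_sum_integral_abs_md:
  fixes f :: "real \<Rightarrow> 'm::metric_space"
  assumes md: "\<forall>x\<in>{a..b}. md_exists f a b x" and m: "md f a b absolutely_integrable_on {a..b}"
    and I: "nonoverlapping_subintervals a b n aa bb"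
  shows "(\<Sum>i<n. dist (f (bb i)) (f (aa i))) \<le> (\<Sum>i<n. integral {aa i..bb i} (\<lambda>x. \<bar>md f a b x\<bar>))"
proof (rule sum_mono)
  fix i assume "i \<in> {..<n}"
  note i = nonoverlapping_subintervalsD[OF I, of i]
  have sub: "{aa i..bb i} \<subseteq> {a..b}" using i \<open>i \<in> {..<n}\<close> by auto
  have mi: "md f a b integrable_on {aa i..bb i}" "(\<lambda>x. \<bar>md f a b x\<bar>) integrable_on {aa i..bb i}"
    using m absolutely_integrable_on_subinterval[OF m sub] by (simp_all add: absolutely_integrable_on_def)
  have "dist (f (bb i)) (f (aa i)) \<le> integral {aa i..bb i} (md f a b)"
    using dist_le_integral_md[OF md mi(1)] i \<open>i \<in> {..<n}\<close> by auto
  also have "\<dots> \<le> integral {aa i..bb i} (\<lambda>x. \<bar>md f a b x\<bar>)"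
    using mi by (rule integral_le) simp
  finally show "dist (f (bb i)) (f (aa i)) \<le> integral {aa i..bb i} (\<lambda>x. \<bar>md f a b x\<bar>)" .
qed

theorem theorem3p8:
  fixes f :: "real \<Rightarrow> 'm::metric_space" and a b :: real
  assumes "\<forall>x\<in>{a..b}. md_exists f a b x"
    and "integrable (lebesgue_on {a..b}) (md f a b)"
  shows "abs_cont_metric f a b"
  unfolding abs_cont_metric_iff
proof (intro allI impI)
  fix \<epsilon> :: real assume "\<epsilon> > 0"
  have m: "md f a b absolutely_integrable_on {a..b}"
    using assms(2) by (simp add: integrable_restrict_space set_integrable_def)
  then have "(\<lambda>x. \<bar>md f a b x\<bar>) integrable_on {a..b}"
    by (simp add: absolutely_integrable_on_def)
  then obtain \<delta> where "\<delta> > 0" and \<delta>: "\<And>n aa bb. nonoverlapping_subintervals a b n aa bb \<Longrightarrow>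
      (\<Sum>i<n. bb i - aa i) < \<delta> \<Longrightarrow> (\<Sum>i<n. integral {aa i..bb i} (\<lambda>x. \<bar>md f a b x\<bar>)) < \<epsilon>"
    by (rule integral_nonoverlapping_small[OF _ _ \<open>\<epsilon> > 0\<close>]) auto
  with sum_dist_le_sum_integral_abs_md[OF assms(1) m]
  show "\<exists>\<delta>>0. \<forall>n aa bb. nonoverlapping_subintervals a b n aa bb \<longrightarrow>
      (\<Sum>i<n. bb i - aa i) < \<delta> \<longrightarrow> (\<Sum>i<n. dist (f (bb i)) (f (aa i))) < \<epsilon>"
    by (meson le_less_trans)
qed

end
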